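(* Let $\mathcal{C}\subsetneq\mathbb{F}_2^n$ be a linear code that is $(\Delta,s)$-locally testable with respect to a $\Delta$-limited parity-check matrix $H$ of size $m\times n$ with $n/2\le m\le n$, and let $\mathbf{0}_t\subseteq\mathbb{F}_2^t$ be the zero code of length $t$. Then the code $\mathcal{C}':=\mathcal{C}\oplus\mathbf{0}_t\subseteq\mathbb{F}_2^{n+t}$ is $(\Delta,s')$-locally testable with respect to a $\Delta$-limited parity-check matrix, where $s':=\min(s/2,1)$.
   Context: A linear code $\mathcal{C}\subseteq\mathbb{F}_q^n$ is $(\Delta,s)$-locally testable with respect to a parity-check matrix $H\in\mathbb{F}_q^{m\times n}$ ($\ker H=\mathcal{C}$) if every row of $H$ has at most $\Delta$ nonzero entries and $\frac1m|Hx|\ge\frac sn d(x,\mathcal{C})$ for all $x\in\mathbb{F}_q^n$ ($|\cdot|$ Hamming weight, $d(x,\mathcal{C})$ Hamming distance to the code). A matrix is $\Delta$-limited if every row and column has at most $\Delta$ nonzero entries. $\mathcal{C}\oplus\mathbf{0}_t=\{(c,0):c\in\mathcal{C}\}$. *)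

theory Defs
  imports Complex_Main "HOL-Library.Z2"
begin

text \<open>Vectors of F_2^n are modelled as functions nat => bit vanishing outside {0..<n};
  an m x n matrix is a function nat => nat => bit (only entries i<m, j<n matter).\<close>

definition vecs :: "nat \<Rightarrow> (nat \<Rightarrow> bit) set" where
  "vecs n = {x. \<forall>i\<ge>n. x i = 0}"

definition mat_vec :: "(nat \<Rightarrow> nat \<Rightarrow> bit) \<Rightarrow> nat \<Rightarrow> nat \<Rightarrow> (nat \<Rightarrow> bit) \<Rightarrow> (nat \<Rightarrow> bit)" where
  "mat_vec H m n x = (\<lambda>i. if i < m then (\<Sum>j<n. H i j * x j) else 0)"

definition hweight :: "nat \<Rightarrow> (nat \<Rightarrow> bit) \<Rightarrow> nat" where
  "hweight n x = card {i. i < n \<and> x i \<noteq> 0}"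

definition hdist :: "nat \<Rightarrow> (nat \<Rightarrow> bit) \<Rightarrow> (nat \<Rightarrow> bit) \<Rightarrow> nat" where
  "hdist n x y = card {i. i < n \<and> x i \<noteq> y i}"

definition dist_code :: "nat \<Rightarrow> (nat \<Rightarrow> bit) \<Rightarrow> (nat \<Rightarrow> bit) set \<Rightarrow> nat" where
  "dist_code n x C = Min (hdist n x ` C)"

definition kernel :: "(nat \<Rightarrow> nat \<Rightarrow> bit) \<Rightarrow> nat \<Rightarrow> nat \<Rightarrow> (nat \<Rightarrow> bit) set" where
  "kernel H m n = {x \<in> vecs n. mat_vec H m n x = (\<lambda>_. 0)}"

definition row_weight :: "(nat \<Rightarrow> nat \<Rightarrow> bit) \<Rightarrow> nat \<Rightarrow> nat \<Rightarrow> nat" where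
  "row_weight H n i = card {j. j < n \<and> H i j \<noteq> 0}"

definition col_weight :: "(nat \<Rightarrow> nat \<Rightarrow> bit) \<Rightarrow> nat \<Rightarrow> nat \<Rightarrow> nat" where
  "col_weight H m j = card {i. i < m \<and> H i j \<noteq> 0}"

definition limited :: "(nat \<Rightarrow> nat \<Rightarrow> bit) \<Rightarrow> nat \<Rightarrow> nat \<Rightarrow> nat \<Rightarrow> bool" where
  "limited H m n \<Delta> \<longleftrightarrow> (\<forall>i<m. row_weight H n i \<le> \<Delta>) \<and> (\<forall>j<n. col_weight H m j \<le> \<Delta>)"

definition locally_testable ::
  "(nat \<Rightarrow> bit) set \<Rightarrow> (nat \<Rightarrow> nat \<Rightarrow> bit) \<Rightarrow> nat \<Rightarrow> nat \<Rightarrow> nat \<Rightarrow> real \<Rightarrow> bool" where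
  "locally_testable C H m n \<Delta> s \<longleftrightarrow>
     kernel H m n = C \<and> (\<forall>i<m. row_weight H n i \<le> \<Delta>) \<and>
     (\<forall>x \<in> vecs n. real (hweight m (mat_vec H m n x)) / real m \<ge> s / real n * real (dist_code n x C))"

definition zero_ext :: "(nat \<Rightarrow> bit) set \<Rightarrow> nat \<Rightarrow> nat \<Rightarrow> (nat \<Rightarrow> bit) set" where
  "zero_ext C n t = {x \<in> vecs (n + t). (\<lambda>i. if i < n then x i else 0) \<in> C \<and> (\<forall>i. n \<le> i \<and> i < n + t \<longrightarrow> x i = 0)}"

end

(*
  Pad H to the block-diagonal matrix diag(H, I_t): the identity rows test the t appended
  coordinates one by one.  The syndrome weight of x then splits as |H x_head| + |x_tail|, and
  the distance to C (+) 0_t is at most d(x_head, C) + |x_tail|.  Comparing the two parts,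
  the head loses at most a factor 2 because n/2 <= m, and the tail, whose local tester has
  soundness 1, loses nothing because m <= n.   The padded matrix stays Delta-limited since
  C being a proper subcode forces a nonzero entry in H, hence Delta >= 1.
*)

theory Submission
  imports Defs
begin

definition truncate :: "nat \<Rightarrow> (nat \<Rightarrow> bit) \<Rightarrow> nat \<Rightarrow> bit" where
  "truncate n x = (\<lambda>i. if i < n then x i else 0)"

lemma truncate_in_vecs: "truncate n x \<in> vecs n"
  by (simp add: truncate_def vecs_def)

lemma truncate_id: "x \<in> vecs n \<Longrightarrow> truncate n x = x"
  by (auto simp: truncate_def vecs_def)

lemma card_less_add_split:
  fixes m t :: nat
  shows "card {i. i < m + t \<and> P i} = card {i. i < m \<and> P i} + card {i. i < t \<and> P (m + i)}"
proof -
  have "{i. i < m + t \<and> P i} = {i. i < m \<and> P i} \<union> (+) m ` {i. i < t \<and> P (m + i)}"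
    (is "_ = ?A \<union> ?B")
  proof (intro equalityI subsetI)
    fix i assume "i \<in> {i. i < m + t \<and> P i}"
    then show "i \<in> ?A \<union> ?B"
      by (cases "i < m") (auto simp: image_iff intro!: exI[of _ "i - m"])
  qed auto
  also have "card \<dots> = card ?A + card ?B"
    by (rule card_Un_disjoint) auto
  also have "card ?B = card {i. i < t \<and> P (m + i)}"
    by (simp add: card_image)
  finally show ?thesis .
qed

lemma all_less_add_iff:
  fixes m t :: nat
  shows "(\<forall>i<m + t. P i) \<longleftrightarrow> (\<forall>i<m. P i) \<and> (\<forall>i<t. P (m + i))"
  by (metis add_less_cancel_left le_add_diff_inverse not_le trans_less_add1)

lemma hweight_add: "hweight (m + t) x = hweight m x + hweight t (\<lambda>i. x (m + i))"
  by (simp add: hweight_def card_less_add_split)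

lemma hdist_add: "hdist (n + t) x y = hdist n x y + hdist t (\<lambda>i. x (n + i)) (\<lambda>i. y (n + i))"
  by (simp add: hdist_def card_less_add_split)

lemma hweight_cong: "(\<And>i. i < m \<Longrightarrow> x i = y i) \<Longrightarrow> hweight m x = hweight m y"
  unfolding hweight_def by (metis (mono_tags, lifting))

lemma hdist_cong:
  "(\<And>i. i < n \<Longrightarrow> x i = x' i) \<Longrightarrow> (\<And>i. i < n \<Longrightarrow> y i = y' i) \<Longrightarrow> hdist n x y = hdist n x' y'"
  unfolding hdist_def by (metis (mono_tags, lifting))

lemma hdist_zero_right: "hdist n x (\<lambda>_. 0) = hweight n x"
  by (simp add: hdist_def hweight_def)

lemma hdist_truncate: "hdist n (truncate n x) y = hdist n x y"
  by (rule hdist_cong) (simp_all add: truncate_def)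

lemma hdist_le: "hdist n x y \<le> n"
  unfolding hdist_def by (rule card_mono[of "{..<n}", simplified]) auto

lemma finite_hdist_image: "finite (hdist n x ` C)"
  by (rule finite_subset[of _ "{..n}"]) (auto simp: hdist_le)

lemma dist_code_le: "c \<in> C \<Longrightarrow> dist_code n x C \<le> hdist n x c"
  unfolding dist_code_def by (simp add: finite_hdist_image)

lemma dist_code_attained:
  assumes "C \<noteq> {}"
  obtains c where "c \<in> C" "dist_code n x C = hdist n x c"
proof -
  have "dist_code n x C \<in> hdist n x ` C"
    unfolding dist_code_def using assms by (intro Min_in finite_hdist_image) auto
  then show ?thesis
    using that by blast
qed

lemma dist_code_truncate: "dist_code n (truncate n x) C = dist_code n x C"
  by (simp add: dist_code_def hdist_truncate)

lemma mat_vec_truncate: "mat_vec H m n (truncate n x) = mat_vec H m n x"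
  unfolding mat_vec_def truncate_def by (auto intro!: sum.cong)

lemma mat_vec_eq_zero_iff: "mat_vec H m n x = (\<lambda>_. 0) \<longleftrightarrow> (\<forall>i<m. mat_vec H m n x i = 0)"
  by (auto simp: mat_vec_def fun_eq_iff)

lemma kernel_subset_vecs: "kernel H m n \<subseteq> vecs n"
  by (auto simp: kernel_def)

lemma zero_in_kernel: "(\<lambda>_. 0) \<in> kernel H m n"
  by (simp add: kernel_def vecs_def mat_vec_def fun_eq_iff)

lemma nonzero_entry_if_kernel_proper:
  assumes "kernel H m n \<noteq> vecs n"
  obtains i j where "i < m" "j < n" "H i j \<noteq> 0"
proof -
  have "\<exists>i<m. \<exists>j<n. H i j \<noteq> 0"
  proof (rule ccontr)
    assume "\<not> (\<exists>i<m. \<exists>j<n. H i j \<noteq> 0)"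
    then have "mat_vec H m n x = (\<lambda>_. 0)" for x
      by (auto simp: mat_vec_def fun_eq_iff intro!: sum.neutral)
    with assms show False
      by (auto simp: kernel_def)
  qed
  with that show ?thesis
    by blast
qed

lemma row_weight_pos: "j < n \<Longrightarrow> H i j \<noteq> 0 \<Longrightarrow> 0 < row_weight H n i"
  unfolding row_weight_def by (subst card_gt_0_iff) auto

lemma zero_ext_iff:
  "x \<in> zero_ext C n t \<longleftrightarrow> x \<in> vecs (n + t) \<and> truncate n x \<in> C \<and> (\<forall>i<t. x (n + i) = 0)"
proof -
  have "(\<forall>i. n \<le> i \<and> i < n + t \<longrightarrow> x i = 0) \<longleftrightarrow> (\<forall>i<t. x (n + i) = 0)"
    by (auto dest: le_Suc_ex)
  then show ?thesis
    by (simp add: zero_ext_def truncate_def)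
qed

lemma dist_code_zero_ext_le:
  assumes "C \<subseteq> vecs n" and "C \<noteq> {}"
  shows "dist_code (n + t) x (zero_ext C n t) \<le> dist_code n x C + hweight t (\<lambda>i. x (n + i))"
proof -
  obtain c where c: "c \<in> C" "dist_code n x C = hdist n x c"
    using dist_code_attained[OF assms(2)] .
  with assms(1) have "c \<in> vecs n" by blast
  then have "c \<in> zero_ext C n t" and "(\<lambda>i. c (n + i)) = (\<lambda>_. 0)"
    using c(1) by (auto simp: zero_ext_iff truncate_id vecs_def)
  then have "dist_code (n + t) x (zero_ext C n t) \<le> hdist n x c + hweight t (\<lambda>i. x (n + i))"
    using dist_code_le[of c "zero_ext C n t" "n + t" x] by (simp add: hdist_add hdist_zero_right)
  with c(2) show ?thesis
    by simp
qed

lemma locally_testable_bound: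
  assumes "locally_testable C H m n \<Delta> s"
  shows "s / real n * real (dist_code n x C) \<le> real (hweight m (mat_vec H m n x)) / real m"
  using assms truncate_in_vecs[of n x]
  unfolding locally_testable_def by (metis dist_code_truncate mat_vec_truncate)

definition pad_identity :: "(nat \<Rightarrow> nat \<Rightarrow> bit) \<Rightarrow> nat \<Rightarrow> nat \<Rightarrow> nat \<Rightarrow> nat \<Rightarrow> bit" where
  "pad_identity H m n i j =
     (if i < m then (if j < n then H i j else 0) else if j = n + (i - m) then 1 else 0)"

lemma mat_vec_pad_identity_top:
  assumes "i < m"
  shows "mat_vec (pad_identity H m n) (m + t) (n + t) x i = mat_vec H m n x i"
proof -
  have "(\<Sum>j<n + t. pad_identity H m n i j * x j) = (\<Sum>j<n. pad_identity H m n i j * x j)"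
    by (rule sum.mono_neutral_right) (auto simp: pad_identity_def assms)
  then show ?thesis
    using assms by (simp add: mat_vec_def pad_identity_def)
qed

lemma mat_vec_pad_identity_bottom:
  assumes "i < t"
  shows "mat_vec (pad_identity H m n) (m + t) (n + t) x (m + i) = x (n + i)"
proof -
  have "(\<Sum>j<n + t. pad_identity H m n (m + i) j * x j) = (\<Sum>j<n + t. if j = n + i then x j else 0)"
    by (rule sum.cong) (simp_all add: pad_identity_def)
  then show ?thesis
    using assms by (simp add: mat_vec_def)
qed

lemma hweight_mat_vec_pad_identity:
  "hweight (m + t) (mat_vec (pad_identity H m n) (m + t) (n + t) x)
     = hweight m (mat_vec H m n x) + hweight t (\<lambda>i. x (n + i))"
proof -
  have "hweight m (mat_vec (pad_identity H m n) (m + t) (n + t) x) = hweight m (mat_vec H m n x)"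
    by (rule hweight_cong) (simp add: mat_vec_pad_identity_top)
  moreover have "hweight t (\<lambda>i. mat_vec (pad_identity H m n) (m + t) (n + t) x (m + i))
      = hweight t (\<lambda>i. x (n + i))"
    by (rule hweight_cong) (simp add: mat_vec_pad_identity_bottom)
  ultimately show ?thesis
    by (simp add: hweight_add)
qed

lemma kernel_pad_identity:
  "kernel (pad_identity H m n) (m + t) (n + t) = zero_ext (kernel H m n) n t"
proof -
  have "mat_vec (pad_identity H m n) (m + t) (n + t) x = (\<lambda>_. 0) \<longleftrightarrow>
      mat_vec H m n x = (\<lambda>_. 0) \<and> (\<forall>i<t. x (n + i) = 0)" for x
    by (simp add: mat_vec_eq_zero_iff all_less_add_iff mat_vec_pad_identity_top
        mat_vec_pad_identity_bottom)
  then show ?thesis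
    unfolding set_eq_iff kernel_def zero_ext_iff mem_Collect_eq
    by (simp add: truncate_in_vecs mat_vec_truncate)
qed

lemma limited_pad_identity:
  assumes "limited H m n \<Delta>" and "1 \<le> \<Delta>"
  shows "limited (pad_identity H m n) (m + t) (n + t) \<Delta>"
  unfolding limited_def all_less_add_iff
proof (intro conjI allI impI)
  fix i assume "i < m"
  then have "row_weight (pad_identity H m n) (n + t) i = row_weight H n i"
    by (auto simp: row_weight_def card_less_add_split pad_identity_def
        intro!: arg_cong[where f = card])
  with \<open>i < m\<close> assms(1) show "row_weight (pad_identity H m n) (n + t) i \<le> \<Delta>"
    by (simp add: limited_def)
next
  fix i assume "i < t"
  then have "row_weight (pad_identity H m n) (n + t) (m + i) = 1"
    by (simp add: row_weight_def card_less_add_split pad_identity_def)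
  with assms(2) show "row_weight (pad_identity H m n) (n + t) (m + i) \<le> \<Delta>"
    by simp
next
  fix j assume "j < n"
  then have "col_weight (pad_identity H m n) (m + t) j = col_weight H m j"
    by (auto simp: col_weight_def card_less_add_split pad_identity_def
        intro!: arg_cong[where f = card])
  with \<open>j < n\<close> assms(1) show "col_weight (pad_identity H m n) (m + t) j \<le> \<Delta>"
    by (simp add: limited_def)
next
  fix j assume "j < t"
  then have "col_weight (pad_identity H m n) (m + t) (n + j) = 1"
    by (simp add: col_weight_def card_less_add_split pad_identity_def)
  with assms(2) show "col_weight (pad_identity H m n) (m + t) (n + j) \<le> \<Delta>"
    by simp
qed

lemma halved_soundness_bound:
  fixes a d s m n t :: real
  assumes test: "s / n * d \<le> a / m"
    and "n \<le> 2 * m" "0 < m" "0 < n" "0 \<le> t" "0 \<le> s" "0 \<le> d"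
  shows "s / 2 * (m + t) * d \<le> a * (n + t)"
proof -
  have "n * (m + t) \<le> 2 * m * (n + t)"
    using assms mult_right_mono[of n "2 * m" t] by (simp add: algebra_simps add_increasing)
  have "s / 2 * (m + t) = s / (2 * n) * (n * (m + t))"
    using \<open>0 < n\<close> by simp
  also have "\<dots> \<le> s / (2 * n) * (2 * m * (n + t))"
    using assms \<open>n * (m + t) \<le> 2 * m * (n + t)\<close> by (intro mult_left_mono) auto
  also have "\<dots> = s * m / n * (n + t)"
    using \<open>0 < n\<close> by simp
  finally have "s / 2 * (m + t) * d \<le> s * m / n * (n + t) * d"
    using \<open>0 \<le> d\<close> by (rule mult_right_mono)
  also have "\<dots> = s * m / n * d * (n + t)"
    by simp
  also have "\<dots> \<le> a * (n + t)"
    using test assms by (intro mult_right_mono) (simp_all add: field_simps)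
  finally show ?thesis .
qed

lemma padded_testability_inequality:
  fixes a d w D s m n t :: real
  assumes test: "s / n * d \<le> a / m" and dist: "D \<le> d + w"
    and "n \<le> 2 * m" "m \<le> n" "0 < m" "0 \<le> t" "0 \<le> a" "0 \<le> d" "0 \<le> w" "0 \<le> D"
  shows "min (s / 2) 1 / (n + t) * D \<le> (a + w) / (m + t)"
proof (cases "0 < s")
  case False
  then have "min (s / 2) 1 / (n + t) * D \<le> 0"
    using assms by (intro mult_nonpos_nonneg divide_nonpos_nonneg) auto
  also have "0 \<le> (a + w) / (m + t)"
    using assms by simp
  finally show ?thesis .
next
  case True
  define s' where "s' = min (s / 2) 1"
  have "0 < n" "0 < s'"
    using assms True by (auto simp: s'_def)
  have "s' * (m + t) * d \<le> s / 2 * (m + t) * d"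
    using assms by (intro mult_right_mono) (auto simp: s'_def)
  also have "\<dots> \<le> a * (n + t)"
    using assms True \<open>0 < n\<close> by (intro halved_soundness_bound) auto
  finally have "s' * (m + t) * d \<le> a * (n + t)" .
  moreover have "s' * (m + t) * w \<le> (n + t) * w"
  proof -
    have "s' * (m + t) \<le> m + t"
      using assms \<open>0 < s'\<close> by (intro mult_left_le_one_le) (auto simp: s'_def)
    with \<open>m \<le> n\<close> have "s' * (m + t) \<le> n + t"
      by linarith
    then show ?thesis
      using \<open>0 \<le> w\<close> by (rule mult_right_mono)
  qed
  moreover have "s' * (m + t) * D \<le> s' * (m + t) * (d + w)"
    using dist \<open>0 < s'\<close> assms by (intro mult_left_mono) auto
  ultimately have "s' * (m + t) * D \<le> (a + w) * (n + t)"
    by (simp add: algebra_simps)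
  then show ?thesis
    using assms \<open>0 < n\<close> by (simp add: s'_def field_simps)
qed

lemma locally_testable_zero_ext:
  assumes lt: "locally_testable C H m n \<Delta> s" and lim: "limited H m n \<Delta>"
    and "1 \<le> \<Delta>" and "n \<le> 2 * m" and "m \<le> n" and "0 < m"
  shows "locally_testable (zero_ext C n t) (pad_identity H m n) (m + t) (n + t) \<Delta> (min (s / 2) 1)"
  unfolding locally_testable_def
proof (intro conjI ballI)
  have C: "kernel H m n = C"
    using lt by (simp add: locally_testable_def)
  then show "kernel (pad_identity H m n) (m + t) (n + t) = zero_ext C n t"
    by (simp add: kernel_pad_identity)
  show "\<forall>i<m + t. row_weight (pad_identity H m n) (n + t) i \<le> \<Delta>"
    using limited_pad_identity[OF lim \<open>1 \<le> \<Delta>\<close>] by (simp add: limited_def)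
  fix x :: "nat \<Rightarrow> bit"
  have "dist_code (n + t) x (zero_ext C n t) \<le> dist_code n x C + hweight t (\<lambda>i. x (n + i))"
    using C kernel_subset_vecs zero_in_kernel by (intro dist_code_zero_ext_le) blast+
  then show "min (s / 2) 1 / real (n + t) * real (dist_code (n + t) x (zero_ext C n t))
      \<le> real (hweight (m + t) (mat_vec (pad_identity H m n) (m + t) (n + t) x)) / real (m + t)"
    unfolding hweight_mat_vec_pad_identity of_nat_add
    using assms locally_testable_bound[OF lt, of x]
    by (intro padded_testability_inequality) auto
qed

theorem lemma13:
  fixes C :: "(nat \<Rightarrow> bit) set" and H :: "nat \<Rightarrow> nat \<Rightarrow> bit"
    and n m t \<Delta> :: nat and s :: real
  assumes "C \<subset> vecs n"
    and "locally_testable C H m n \<Delta> s"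
    and "limited H m n \<Delta>"
    and "real n / 2 \<le> real m" and "m \<le> n"
  shows "\<exists>H' m'. limited H' m' (n + t) \<Delta> \<and>
           locally_testable (zero_ext C n t) H' m' (n + t) \<Delta> (min (s / 2) 1)"
proof -
  have "kernel H m n \<noteq> vecs n"
    using assms(1,2) by (auto simp: locally_testable_def)
  then obtain i j where "i < m" "j < n" "H i j \<noteq> 0"
    by (rule nonzero_entry_if_kernel_proper)
  then have "1 \<le> \<Delta>"
    using row_weight_pos[of j n H i] assms(2) by (fastforce simp: locally_testable_def)
  moreover have "n \<le> 2 * m"
    using assms(4) by linarith
  ultimately show ?thesis
    using assms(2,3,5) \<open>i < m\<close> limited_pad_identity locally_testable_zero_ext by blast
qed

end
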